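(* Let $\Delta$ be a $d$-dimensional simplicial forest. Then $f_0 \geq f_d$, where $f_i$ denotes the number of $i$-dimensional faces of $\Delta$.
   Context: A simplicial complex $\Delta$ is a collection of subsets (faces) of a finite vertex set closed under taking subsets; facets are maximal faces, $\dim \tau = |\tau|-1$, and $\dim\Delta$ is the maximal dimension of a face. For facets $F_1,\dots,F_s$ write $\Delta=\langle F_1,\dots,F_s\rangle$. A facet $F$ of $\Delta$ is a leaf if either $F$ is the only facet of $\Delta$, or there is a facet $G\neq F$ of $\Delta$ with $F\cap F'\subseteq F\cap G$ for every facet $F'\neq F$ of $\Delta$. $\Delta$ is a simplicial tree if $\Delta$ is connected and every subcomplex of the form $\langle F_{i_1},\dots,F_{i_r}\rangle$ (generated by a nonempty subset of the facets) has a leaf. $\Delta$ is a simplicial forest if every connected component of $\Delta$ is a simplicial tree. *)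

theory Defs
  imports Main
begin

text \<open>A simplicial complex is represented by its (finite) set of facets Fs:
  a finite antichain of finite nonempty vertex sets. Its faces are all subsets
  of facets.\<close>

definition facet_set :: "'a set set \<Rightarrow> bool" where
  "facet_set Fs \<longleftrightarrow> finite Fs \<and> Fs \<noteq> {} \<and> (\<forall>F\<in>Fs. finite F \<and> F \<noteq> {}) \<and>
     (\<forall>F\<in>Fs. \<forall>G\<in>Fs. F \<subseteq> G \<longrightarrow> F = G)"

definition faces :: "'a set set \<Rightarrow> 'a set set" where
  "faces Fs = {\<sigma>. \<exists>F\<in>Fs. \<sigma> \<subseteq> F}"

definition fvec :: "'a set set \<Rightarrow> nat \<Rightarrow> nat" where
  "fvec Fs i = card {\<sigma>\<in>faces Fs. card \<sigma> = i + 1}"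

definition cplx_dim :: "'a set set \<Rightarrow> nat" where
  "cplx_dim Fs = Max (card ` Fs) - 1"

definition is_leaf :: "'a set set \<Rightarrow> 'a set \<Rightarrow> bool" where
  "is_leaf S F \<longleftrightarrow> F \<in> S \<and> (S = {F} \<or>
     (\<exists>G\<in>S. G \<noteq> F \<and> (\<forall>F'\<in>S. F' \<noteq> F \<longrightarrow> F \<inter> F' \<subseteq> F \<inter> G)))"

definition facet_adj :: "'a set set \<Rightarrow> ('a set \<times> 'a set) set" where
  "facet_adj Fs = {(F, G). F \<in> Fs \<and> G \<in> Fs \<and> F \<inter> G \<noteq> {}}"

definition cplx_connected :: "'a set set \<Rightarrow> bool" where
  "cplx_connected Fs \<longleftrightarrow> (\<forall>F\<in>Fs. \<forall>G\<in>Fs. (F, G) \<in> (facet_adj Fs)\<^sup>*)"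

definition simplicial_tree :: "'a set set \<Rightarrow> bool" where
  "simplicial_tree Fs \<longleftrightarrow> cplx_connected Fs \<and>
     (\<forall>S. S \<subseteq> Fs \<and> S \<noteq> {} \<longrightarrow> (\<exists>F. is_leaf S F))"

definition components :: "'a set set \<Rightarrow> 'a set set set" where
  "components Fs = (\<lambda>F. {G\<in>Fs. (F, G) \<in> (facet_adj Fs)\<^sup>*}) ` Fs"

definition simplicial_forest :: "'a set set \<Rightarrow> bool" where
  "simplicial_forest Fs \<longleftrightarrow> (\<forall>C\<in>components Fs. simplicial_tree C)"

end

theory Submission
  imports Defs
begin

text \<open>A leaf F of a family of pairwise incomparable facets has a vertex lying in no other
  facet: F meets every other facet inside F \<inter> G, and F \<noteq> G. Peeling off leaves one at a time
  therefore shows that a family in which every nonempty subfamily has a leaf has at most as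
  many facets as vertices. In a forest such leaves exist because distinct connected components
  share no vertex, so a leaf of the part of a subfamily inside one component is a leaf of the
  whole subfamily. Finally the d-dimensional faces of a d-dimensional complex are facets, and
  f_0 is the number of vertices.\<close>

lemma leaf_has_private_vertex:
  assumes leaf: "is_leaf S F"
    and antichain: "\<forall>F\<in>S. \<forall>G\<in>S. F \<subseteq> G \<longrightarrow> F = G"
    and "F \<noteq> {}"
  obtains v where "v \<in> F" "v \<notin> \<Union>(S - {F})"
proof (cases "S = {F}")
  case True
  then show ?thesis using \<open>F \<noteq> {}\<close> that by auto
next
  case False
  then obtain G where G: "G \<in> S" "G \<noteq> F" "\<forall>F'\<in>S. F' \<noteq> F \<longrightarrow> F \<inter> F' \<subseteq> F \<inter> G"
    using leaf unfolding is_leaf_def by blast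
  have "F \<in> S" using leaf unfolding is_leaf_def by blast
  then have "\<not> F \<subseteq> G" using antichain G(1,2) by blast
  then obtain v where "v \<in> F" "v \<notin> G" by blast
  then show ?thesis using that G(3) by blast
qed

lemma card_le_card_Union_if_subfamilies_have_leaves:
  assumes "finite S"
    and facets: "\<forall>F\<in>S. finite F \<and> F \<noteq> {}"
    and antichain: "\<forall>F\<in>S. \<forall>G\<in>S. F \<subseteq> G \<longrightarrow> F = G"
    and leaves: "\<forall>T\<subseteq>S. T \<noteq> {} \<longrightarrow> (\<exists>F. is_leaf T F)"
  shows "card S \<le> card (\<Union>S)"
  using \<open>finite S\<close>
proof (induction rule: finite_remove_induct)
  case empty
  then show ?case by simp
next
  case (remove A)
  obtain F where leaf: "is_leaf A F" using leaves remove.hyps(2,3) by blast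
  then have "F \<in> A" unfolding is_leaf_def by blast
  have fin: "finite (\<Union>A)" using remove.hyps(1,3) facets by auto
  obtain v where v: "v \<in> F" "v \<notin> \<Union>(A - {F})"
    using leaf_has_private_vertex[OF leaf] antichain facets remove.hyps(3) \<open>F \<in> A\<close>
    by (metis subsetD)
  have "card A = Suc (card (A - {F}))"
    using card_Suc_Diff1[OF remove.hyps(1) \<open>F \<in> A\<close>] by simp
  also have "\<dots> \<le> Suc (card (\<Union>(A - {F})))"
    using remove.IH[OF \<open>F \<in> A\<close>] by simp
  also have "\<dots> = card (insert v (\<Union>(A - {F})))"
    using v(2) fin by (simp add: finite_subset[of "\<Union>(A - {F})" "\<Union>A"] Union_mono)
  also have "\<dots> \<le> card (\<Union>A)"
    using v(1) \<open>F \<in> A\<close> fin by (intro card_mono) auto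
  finally show ?case .
qed

lemma is_leaf_extend_disjoint:
  assumes leaf: "is_leaf U F" and "U \<subseteq> T"
    and disjoint: "\<forall>F'\<in>T - U. F \<inter> F' = {}"
  shows "is_leaf T F"
proof -
  have "F \<in> T" using leaf \<open>U \<subseteq> T\<close> unfolding is_leaf_def by blast
  consider "T = {F}" | G where "G \<in> T" "G \<noteq> F" "\<forall>F'\<in>U. F' \<noteq> F \<longrightarrow> F \<inter> F' \<subseteq> F \<inter> G"
  proof (cases "U = {F}")
    case True
    then show ?thesis using that \<open>F \<in> T\<close> by blast
  next
    case False
    then show ?thesis using that leaf \<open>U \<subseteq> T\<close> unfolding is_leaf_def by blast
  qed
  then show ?thesis
  proof cases
    case 1
    then show ?thesis unfolding is_leaf_def by blast
  next
    case (2 G)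
    then have "\<forall>F'\<in>T. F' \<noteq> F \<longrightarrow> F \<inter> F' \<subseteq> F \<inter> G" using disjoint by blast
    then show ?thesis using 2 \<open>F \<in> T\<close> unfolding is_leaf_def by blast
  qed
qed

lemma component_disjoint_from_outside:
  assumes "F \<in> {G\<in>Fs. (F0, G) \<in> (facet_adj Fs)\<^sup>*}"
    and "F' \<in> Fs - {G\<in>Fs. (F0, G) \<in> (facet_adj Fs)\<^sup>*}"
  shows "F \<inter> F' = {}"
proof (rule ccontr)
  assume "F \<inter> F' \<noteq> {}"
  then have "(F, F') \<in> facet_adj Fs" using assms unfolding facet_adj_def by auto
  then show False using assms by (auto intro: rtrancl_into_rtrancl)
qed

lemma simplicial_forest_subfamily_has_leaf:
  assumes forest: "simplicial_forest Fs" and "T \<subseteq> Fs" "T \<noteq> {}"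
  shows "\<exists>F. is_leaf T F"
proof -
  obtain F0 where "F0 \<in> T" using \<open>T \<noteq> {}\<close> by blast
  define C where "C = {G\<in>Fs. (F0, G) \<in> (facet_adj Fs)\<^sup>*}"
  have "C \<in> components Fs" unfolding components_def C_def using \<open>F0 \<in> T\<close> \<open>T \<subseteq> Fs\<close> by blast
  then have "simplicial_tree C" using forest unfolding simplicial_forest_def by blast
  moreover have "F0 \<in> T \<inter> C" unfolding C_def using \<open>F0 \<in> T\<close> \<open>T \<subseteq> Fs\<close> by blast
  ultimately obtain F where leaf: "is_leaf (T \<inter> C) F"
    unfolding simplicial_tree_def by (metis empty_iff inf_le2)
  have "\<forall>F'\<in>T - T \<inter> C. F \<inter> F' = {}"
    using leaf \<open>T \<subseteq> Fs\<close> component_disjoint_from_outside[of F Fs F0] unfolding is_leaf_def C_def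
    by blast
  then show ?thesis using is_leaf_extend_disjoint[OF leaf] by blast
qed

lemma fvec_0_eq_card_vertices: "fvec Fs 0 = card (\<Union>Fs)"
proof -
  have "{\<sigma>\<in>faces Fs. card \<sigma> = 0 + 1} = (\<lambda>v. {v}) ` \<Union>Fs"
    unfolding faces_def by (auto simp: card_Suc_eq)
  then show ?thesis unfolding fvec_def by (simp add: card_image)
qed

lemma fvec_dim_le_card_facets:
  assumes "facet_set Fs"
  shows "fvec Fs (cplx_dim Fs) \<le> card Fs"
proof -
  have fin: "finite Fs" "Fs \<noteq> {}" "\<forall>F\<in>Fs. finite F \<and> F \<noteq> {}"
    using assms unfolding facet_set_def by auto
  obtain F1 where "F1 \<in> Fs" using fin by blast
  then have "1 \<le> card F1" using fin by (simp add: Suc_leI card_gt_0_iff)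
  also have "\<dots> \<le> Max (card ` Fs)" using \<open>F1 \<in> Fs\<close> fin by simp
  finally have max_pos: "Max (card ` Fs) \<ge> 1" .
  have "{\<sigma>\<in>faces Fs. card \<sigma> = cplx_dim Fs + 1} \<subseteq> Fs"
  proof
    fix \<sigma> assume "\<sigma> \<in> {\<sigma>\<in>faces Fs. card \<sigma> = cplx_dim Fs + 1}"
    then obtain F where F: "F \<in> Fs" "\<sigma> \<subseteq> F" "card \<sigma> = Max (card ` Fs)"
      unfolding faces_def cplx_dim_def using max_pos by auto
    have "card F \<le> card \<sigma>" using F fin by simp
    then have "\<sigma> = F" using F fin by (metis card_seteq)
    then show "\<sigma> \<in> Fs" using F by simp
  qed
  then show ?thesis unfolding fvec_def using card_mono[OF fin(1)] by blast
qed

theorem lemma2p5: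
  fixes Fs :: "'a set set" and d :: nat
  assumes "facet_set Fs"
    and "cplx_dim Fs = d"
    and "simplicial_forest Fs"
  shows "fvec Fs 0 \<ge> fvec Fs d"
proof -
  have facets: "finite Fs" "\<forall>F\<in>Fs. finite F \<and> F \<noteq> {}" "\<forall>F\<in>Fs. \<forall>G\<in>Fs. F \<subseteq> G \<longrightarrow> F = G"
    using \<open>facet_set Fs\<close> unfolding facet_set_def by auto
  have "fvec Fs d \<le> card Fs"
    using fvec_dim_le_card_facets[OF \<open>facet_set Fs\<close>] \<open>cplx_dim Fs = d\<close> by simp
  also have "\<dots> \<le> card (\<Union>Fs)"
    using card_le_card_Union_if_subfamilies_have_leaves[OF facets]
      simplicial_forest_subfamily_has_leaf[OF \<open>simplicial_forest Fs\<close>] by blast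
  also have "\<dots> = fvec Fs 0"
    by (simp add: fvec_0_eq_card_vertices)
  finally show ?thesis .
qed

end
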